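(* Let $d\ge 1$, $R>0$, $\Omega=(-R,R)^d$, and write points of $\mathbb{R}^d$ as ${\bf x}=(x_1,\dots,x_{d-1},z)$. Let $\Gamma^+=\{{\bf x}=(x_1,\dots,x_{d-1},R): |x_i|\le R,\ 1\le i\le d-1\}\subset\partial\Omega$. Let $\beta>1$, $r>R+1$ and $b>R+r$. Then there exist a number $\lambda_0=\lambda_0(\beta,r,R,b,d)$ and a constant $C=C(r,R,b,d)>0$, depending only on the listed parameters, such that for all $\lambda>\lambda_0$ and all $u\in C^2(\overline\Omega)$ with $u=0$ on $\partial\Omega$ and $u_z=0$ on $\Gamma^+$, \[ \int_\Omega e^{2\lambda (\frac{z+r}{b})^\beta}|\Delta u|^2\,d{\bf x}\ \ge\ C\lambda^3\beta^2(\beta-1)b^{-3\beta}(-R+r)^{2\beta}\int_\Omega e^{2\lambda(\frac{z+r}{b})^\beta}|u|^2\,d{\bf x}+C\lambda(\beta-1)b^{-\beta}\int_\Omega e^{2\lambda(\frac{z+r}{b})^\beta}|\nabla u|^2\,d{\bf x}. \]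
   Context: $u_z$ denotes the partial derivative of $u$ with respect to the last coordinate $z$. *)

theory Defs
  imports "HOL-Analysis.Analysis"
begin

text \<open>The open cube \<Omega> = (-R,R)^d in R^d, rendered as real^'n with d = CARD('n).\<close>
definition cube :: "real \<Rightarrow> (real^'n) set" where
  "cube R = box (\<chi> i. - R) (\<chi> i. R)"

text \<open>u \<in> C^2(closure S): u is twice differentiable on the open set S with gradient Du
  and Hessian D2u, and u, Du, D2u are continuous on closure S (i.e. u and its
  derivatives up to order 2 extend continuously to the closure).\<close>
definition C2_closure ::
  "(real^'n) set \<Rightarrow> (real^'n \<Rightarrow> real) \<Rightarrow> (real^'n \<Rightarrow> real^'n) \<Rightarrow> (real^'n \<Rightarrow> real^'n^'n) \<Rightarrow> bool" where
  "C2_closure S u Du D2u \<longleftrightarrow>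
     (\<forall>x\<in>S. (u has_derivative (\<lambda>h. Du x \<bullet> h)) (at x)) \<and>
     (\<forall>x\<in>S. (Du has_derivative (\<lambda>h. D2u x *v h)) (at x)) \<and>
     continuous_on (closure S) u \<and> continuous_on (closure S) Du \<and> continuous_on (closure S) D2u"

definition lap :: "(real^'n \<Rightarrow> real^'n^'n) \<Rightarrow> real^'n \<Rightarrow> real" where
  "lap D2u x = (\<Sum>i\<in>UNIV. D2u x $ i $ i)"

end

(* Write z = x$k and w = e^psi(z) u with psi(z) = mu (z + r)^beta, mu = lambda b^-beta.  Then
   e^psi Lap u = Lap w - 2 psi' w_z + (psi'^2 - psi'') w.  Expanding the square of the right-hand side,
   each cross term is a derivative along one coordinate and integrates to a boundary term: these
   vanish since w = 0 on the boundary (hence so do its tangential derivatives) and w_z = 0 on the top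
   face, except for psi' w_z^2 on the bottom face, which has the right sign.  What is left is a sum of
   squares plus 2 psi''|grad w|^2 + psi'^2 psi'' w^2, as soon as psi''^2 + psi'''^2/psi'' <= psi'^2 psi'',
   which holds once mu (r - R)^beta > 2.  Lower bounds for psi'' and psi'^2 psi'' on [-R, R], together with
   e^(2 psi) |grad u|^2 <= 2 |grad w|^2 + 2 psi'^2 w^2, give the estimate for u. *)

theory Submission
  imports Defs
begin

section \<open>Integration along one coordinate\<close>

definition vec_upd :: "'a^'n \<Rightarrow> 'n \<Rightarrow> 'a \<Rightarrow> 'a^'n" where
  "vec_upd x i t = (\<chi> j. if j = i then t else x $ j)"

lemma vec_upd_nth [simp]: "vec_upd x i t $ j = (if j = i then t else x $ j)"
  by (simp add: vec_upd_def)

lemma vec_upd_upd [simp]: "vec_upd (vec_upd x i s) i t = vec_upd x i t"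
  by (simp add: vec_eq_iff)

lemma vec_upd_same [simp]: "vec_upd x i (x $ i) = x"
  by (simp add: vec_eq_iff)

lemma vec_upd_eq_line: "vec_upd x i t = vec_upd x i 0 + t *\<^sub>R axis i (1::real)"
  by (simp add: vec_eq_iff axis_def)

lemma continuous_on_vec_upd [continuous_intros]:
  fixes f :: "'a::topological_space \<Rightarrow> real^'n"
  assumes "continuous_on S f" "continuous_on S g"
  shows "continuous_on S (\<lambda>p. vec_upd (f p) i (g p))"
proof -
  have "(\<lambda>p. vec_upd (f p) i (g p)) = (\<lambda>p. f p - (f p $ i) *\<^sub>R axis i 1 + g p *\<^sub>R axis i 1)"
    by (auto simp: vec_eq_iff axis_def)
  moreover have "continuous_on S (\<lambda>p. f p - (f p $ i) *\<^sub>R axis i 1 + g p *\<^sub>R axis i 1)"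
    using assms by (intro continuous_intros)
  ultimately show ?thesis
    by (simp only:)
qed

lemma vec_upd_in_box:
  fixes x :: "real^'n"
  shows "x \<in> box a b \<Longrightarrow> t \<in> {a$i<..<b$i} \<Longrightarrow> vec_upd x i t \<in> box a b"
  by (auto simp: mem_box_cart)

lemma vec_upd_in_cbox_minus_box:
  fixes x :: "real^'n"
  assumes "x \<in> cbox a b" "a$i \<le> b$i" "c = a$i \<or> c = b$i"
  shows "vec_upd x i c \<in> cbox a b - box a b"
  using assms by (auto simp: mem_box_cart)

lemma continuous_on_cbox_coord:
  fixes a b :: "real^'n"
  assumes "continuous_on {a$k..b$k} f"
  shows "continuous_on (cbox a b) (\<lambda>x. f (x$k))"
  by (rule continuous_on_compose2[OF assms]) (auto intro!: continuous_intros simp: mem_box_cart)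

definition swap_coord :: "'n \<Rightarrow> (real^'n) \<times> real \<Rightarrow> (real^'n) \<times> real" where
  "swap_coord k p = (vec_upd (fst p) k (snd p), fst p $ k)"

lemma swap_coord_swap_coord [simp]: "swap_coord k (swap_coord k p) = p"
  by (simp add: swap_coord_def)

lemma swap_coord_image_cbox: "swap_coord k ` cbox u v = cbox (swap_coord k u) (swap_coord k v)"
proof -
  have mem: "swap_coord k y \<in> cbox u v \<longleftrightarrow> y \<in> cbox (swap_coord k u) (swap_coord k v)" for y
    by (cases y; cases u; cases v) (simp add: swap_coord_def cbox_Pair_eq mem_box_cart, metis)
  show ?thesis
    by (rule set_eqI) (metis image_iff mem swap_coord_swap_coord)
qed

lemma measure_swap_coord_cbox:
  "measure lborel (cbox (swap_coord k u) (swap_coord k v)) = measure lborel (cbox u v)"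
proof (cases "cbox u v = {}")
  case True
  then show ?thesis
    by (metis image_is_empty swap_coord_image_cbox)
next
  case False
  obtain u1 u2 v1 v2 where uv: "u = (u1, u2)" "v = (v1, v2)"
    by fastforce
  from False have ne1: "cbox u1 v1 \<noteq> {}" and le2: "u2 \<le> v2"
    by (auto simp: uv cbox_Pair_eq)
  then have le: "u1 $ i \<le> v1 $ i" for i
    by (meson all_not_in_conv mem_box_cart(2) order_trans)
  have "vec_upd u1 k u2 \<in> cbox (vec_upd u1 k u2) (vec_upd v1 k v2)"
    using le le2 by (simp add: mem_box_cart)
  then have ne1': "cbox (vec_upd u1 k u2) (vec_upd v1 k v2) \<noteq> {}"
    by blast
  have "(\<Prod>i\<in>UNIV. (if i = k then v2 else v1 $ i) - (if i = k then u2 else u1 $ i))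
      = (v2 - u2) * (\<Prod>i\<in>UNIV - {k}. v1 $ i - u1 $ i)"
    by (subst prod.remove[of UNIV k]) (auto intro!: prod.cong)
  moreover have "(\<Prod>i\<in>UNIV. v1 $ i - u1 $ i) = (v1 $ k - u1 $ k) * (\<Prod>i\<in>UNIV - {k}. v1 $ i - u1 $ i)"
    by (simp add: prod.remove[of UNIV k])
  ultimately show ?thesis
    unfolding uv swap_coord_def fst_conv snd_conv content_Pair
      content_cbox_cart[OF ne1] content_cbox_cart[OF ne1']
    using le le2 by (simp add: cbox_interval)
qed

lemma continuous_swap_coord: "continuous (at p) (swap_coord k)"
proof -
  have "continuous_on UNIV (swap_coord k)"
    unfolding swap_coord_def by (intro continuous_intros)
  then show ?thesis
    using continuous_on_eq_continuous_at open_UNIV by blast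
qed

text \<open>Both sides are integrals over \<open>cbox a b \<times> {a$k..b$k}\<close>: the swap of \<open>x$k\<close> with the extra
  coordinate is a measure-preserving involution carrying one integrand to the other.\<close>
lemma integral_cbox_coordinate_slices:
  fixes G :: "real^'n \<Rightarrow> real"
  assumes G: "continuous_on (cbox a b) G" and ab: "a$k \<le> b$k"
  shows "(b$k - a$k) * integral (cbox a b) G
       = integral (cbox a b) (\<lambda>x. integral {a$k..b$k} (\<lambda>t. G (vec_upd x k t)))"
proof -
  let ?A = "(a, a$k)" and ?B = "(b, b$k)"
  have fixed: "swap_coord k ?A = ?A" "swap_coord k ?B = ?B"
    by (simp_all add: swap_coord_def)
  have c1: "continuous_on (cbox ?A ?B) (\<lambda>p. G (fst p))"
    by (rule continuous_on_compose2[OF G]) (auto intro!: continuous_intros simp: cbox_Pair_eq)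
  have c2: "continuous_on (cbox ?A ?B) (\<lambda>p. G (vec_upd (fst p) k (snd p)))"
    by (rule continuous_on_compose2[OF G])
       (auto intro!: continuous_intros simp: cbox_Pair_eq mem_box_cart cbox_interval less_eq_vec_def)
  have "((\<lambda>p. G (fst p)) has_integral integral (cbox ?A ?B) (\<lambda>p. G (fst p))) (cbox ?A ?B)"
    using c1 integrable_continuous by blast
  then have "((\<lambda>p. G (fst (swap_coord k p))) has_integral (1/1) *\<^sub>R integral (cbox ?A ?B) (\<lambda>p. G (fst p)))
      (swap_coord k ` cbox ?A ?B)"
    by (rule has_integral_twiddle[where g="swap_coord k" and h="swap_coord k" and r=1, rotated -1])
       (simp_all add: continuous_swap_coord swap_coord_image_cbox measure_swap_coord_cbox,
        (metis surj_pair)+)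
  then have "integral (cbox ?A ?B) (\<lambda>p. G (vec_upd (fst p) k (snd p)))
      = integral (cbox ?A ?B) (\<lambda>p. G (fst p))"
    by (simp only: swap_coord_image_cbox fixed) (simp add: swap_coord_def integral_unique)
  also have "\<dots> = (b$k - a$k) * integral (cbox a b) G"
    using integral_prod_continuous[OF c1] ab by (simp add: cbox_interval)
  finally show ?thesis
    using integral_prod_continuous[OF c2] by (simp add: cbox_interval)
qed

lemma integral_cbox_partial_derivative:
  fixes F G :: "real^'n \<Rightarrow> real"
  assumes ab: "a$k \<le> b$k"
    and F: "continuous_on (cbox a b) F" and G: "continuous_on (cbox a b) G"
    and D: "\<And>x. x \<in> box a b \<Longrightarrow> ((\<lambda>t. F (vec_upd x k t)) has_real_derivative G x) (at (x$k))"
  shows "(b$k - a$k) * integral (cbox a b) G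
       = integral (cbox a b) (\<lambda>x. F (vec_upd x k (b$k)) - F (vec_upd x k (a$k)))"
proof -
  have "integral (cbox a b) (\<lambda>x. integral {a$k..b$k} (\<lambda>t. G (vec_upd x k t)))
      = integral (cbox a b) (\<lambda>x. F (vec_upd x k (b$k)) - F (vec_upd x k (a$k)))"
  proof (rule integral_spike[OF negligible_frontier_interval])
    fix x assume "x \<in> cbox a b - (cbox a b - box a b)"
    then have x: "x \<in> box a b"
      by blast
    have "((\<lambda>t. G (vec_upd x k t)) has_integral F (vec_upd x k (b$k)) - F (vec_upd x k (a$k))) {a$k..b$k}"
    proof (rule fundamental_theorem_of_calculus_interior[OF ab])
      show "continuous_on {a$k..b$k} (\<lambda>t. F (vec_upd x k t))"
        by (rule continuous_on_compose2[OF F])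
           (use x in \<open>auto intro!: continuous_intros simp: mem_box_cart less_imp_le\<close>)
    next
      fix t assume t: "t \<in> {a$k<..<b$k}"
      have "vec_upd x k t \<in> box a b"
        using x t by (rule vec_upd_in_box)
      from D[OF this] show "((\<lambda>t. F (vec_upd x k t)) has_vector_derivative G (vec_upd x k t)) (at t)"
        by (simp add: has_real_derivative_iff_has_vector_derivative)
    qed
    then show "F (vec_upd x k (b$k)) - F (vec_upd x k (a$k)) = integral {a$k..b$k} (\<lambda>t. G (vec_upd x k t))"
      by (simp add: integral_unique)
  qed
  then show ?thesis
    using integral_cbox_coordinate_slices[OF G ab] by simp
qed

lemma has_integral_partial_derivative_eq_0:
  fixes F G :: "real^'n \<Rightarrow> real"
  assumes ab: "a$k < b$k"
    and F: "continuous_on (cbox a b) F" and G: "continuous_on (cbox a b) G"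
    and D: "\<And>x. x \<in> box a b \<Longrightarrow> ((\<lambda>t. F (vec_upd x k t)) has_real_derivative G x) (at (x$k))"
    and faces: "\<And>x. x \<in> cbox a b \<Longrightarrow> F (vec_upd x k (a$k)) = 0 \<and> F (vec_upd x k (b$k)) = 0"
  shows "(G has_integral 0) (cbox a b)"
proof -
  have "integral (cbox a b) (\<lambda>x. F (vec_upd x k (b$k)) - F (vec_upd x k (a$k))) = integral (cbox a b) (\<lambda>x. 0)"
    using faces by (intro integral_cong) auto
  then have "integral (cbox a b) G = 0"
    using integral_cbox_partial_derivative[OF less_imp_le[OF ab] F G D] ab by simp
  then show ?thesis
    using integrable_continuous[OF G] by (metis integrable_integral)
qed

lemma integral_partial_derivative_nonpos:
  fixes F G :: "real^'n \<Rightarrow> real"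
  assumes ab: "a$k < b$k"
    and F: "continuous_on (cbox a b) F" and G: "continuous_on (cbox a b) G"
    and D: "\<And>x. x \<in> box a b \<Longrightarrow> ((\<lambda>t. F (vec_upd x k t)) has_real_derivative G x) (at (x$k))"
    and faces: "\<And>x. x \<in> cbox a b \<Longrightarrow> F (vec_upd x k (b$k)) \<le> F (vec_upd x k (a$k))"
  shows "integral (cbox a b) G \<le> 0"
proof -
  have "continuous_on (cbox a b) (\<lambda>x. F (vec_upd x k (b$k)) - F (vec_upd x k (a$k)))"
    by (intro continuous_intros continuous_on_compose2[OF F])
       (use ab in \<open>auto simp: mem_box_cart\<close>)
  then have "integral (cbox a b) (\<lambda>x. F (vec_upd x k (b$k)) - F (vec_upd x k (a$k))) \<le> integral (cbox a b) (\<lambda>x. 0)"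
    using faces by (intro integral_le integrable_continuous) auto
  then have "(b$k - a$k) * integral (cbox a b) G \<le> 0"
    using integral_cbox_partial_derivative[OF less_imp_le[OF ab] F G D] by simp
  then show ?thesis
    using ab by (simp add: mult_le_0_iff)
qed

section \<open>Partial derivatives and symmetry of the Hessian\<close>

lemma has_real_derivative_along_line:
  fixes f :: "'a::real_inner \<Rightarrow> real"
  assumes "(f has_derivative (\<lambda>h. D \<bullet> h)) (at (y + s *\<^sub>R v))"
  shows "((\<lambda>s. f (y + s *\<^sub>R v)) has_real_derivative D \<bullet> v) (at s)"
proof -
  have "((\<lambda>s. y + s *\<^sub>R v) has_derivative (\<lambda>h. h *\<^sub>R v)) (at s)"
    by (auto intro!: derivative_eq_intros)
  from diff_chain_at[OF this assms]
  have "((\<lambda>s. f (y + s *\<^sub>R v)) has_derivative (\<lambda>h. h * (D \<bullet> v))) (at s)"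
    by (simp add: o_def)
  then show ?thesis
    by (simp add: has_field_derivative_def mult_commute_abs)
qed

lemma has_derivative_vec_nth_matrix:
  assumes "(f has_derivative (\<lambda>h. M *v h)) F"
  shows "((\<lambda>x. f x $ j) has_derivative (\<lambda>h. row j M \<bullet> h)) F"
proof -
  have "((\<lambda>x. f x $ j) has_derivative (\<lambda>h. (M *v h) $ j)) F"
    by (rule bounded_linear.has_derivative[OF bounded_linear_vec_nth assms])
  moreover have "(\<lambda>h. (M *v h) $ j) = (\<lambda>h. row j M \<bullet> h)"
    by (simp add: fun_eq_iff matrix_vector_mult_def inner_vec_def row_def mult.commute)
  ultimately show ?thesis
    by simp
qed

lemma has_real_derivative_along_axis:
  assumes "(f has_derivative (\<lambda>h. D \<bullet> h)) (at (y + s *\<^sub>R axis i 1))"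
  shows "((\<lambda>s. f (y + s *\<^sub>R axis i 1)) has_real_derivative D $ i) (at s)"
  using has_real_derivative_along_line[OF assms] by (simp add: inner_axis)

lemma has_real_derivative_along_axis_matrix:
  assumes "(f has_derivative (\<lambda>h. M *v h)) (at (y + s *\<^sub>R axis j 1))"
  shows "((\<lambda>s. f (y + s *\<^sub>R axis j 1) $ i) has_real_derivative M $ i $ j) (at s)"
  using has_real_derivative_along_axis[OF has_derivative_vec_nth_matrix[OF assms]] by (simp add: row_def)

lemma has_real_derivative_partial:
  assumes "(f has_derivative (\<lambda>h. D \<bullet> h)) (at x)"
  shows "((\<lambda>t. f (vec_upd x i t)) has_real_derivative D $ i) (at (x$i))"
  using has_real_derivative_along_axis[of f D "vec_upd x i 0" "x$i" i] assms
  by (simp flip: vec_upd_eq_line)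

lemma has_real_derivative_partial_matrix:
  assumes "(f has_derivative (\<lambda>h. M *v h)) (at x)"
  shows "((\<lambda>t. f (vec_upd x i t) $ j) has_real_derivative M $ j $ i) (at (x$i))"
  using has_real_derivative_along_axis_matrix[of f M "vec_upd x i 0" "x$i" i j] assms
  by (simp flip: vec_upd_eq_line)

lemma has_real_derivative_partial_coord:
  assumes "(f has_real_derivative D) (at (x$k))"
  shows "((\<lambda>t. f (vec_upd x i t $ k)) has_real_derivative (if i = k then D else 0)) (at (x$i))"
  using assms by (cases "i = k") auto

lemma second_difference_mean_value:
  fixes w :: "real^'n \<Rightarrow> real"
  assumes h: "h > 0"
    and square: "\<And>s t. s \<in> {0..h} \<Longrightarrow> t \<in> {0..h} \<Longrightarrow> x + s *\<^sub>R axis i 1 + t *\<^sub>R axis j 1 \<in> S"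
    and Dw: "\<And>y. y \<in> S \<Longrightarrow> (w has_derivative (\<lambda>h. Dw y \<bullet> h)) (at y)"
    and D2w: "\<And>y. y \<in> S \<Longrightarrow> (Dw has_derivative (\<lambda>h. D2w y *v h)) (at y)"
  obtains s t where "s \<in> {0<..<h}" "t \<in> {0<..<h}"
    "w (x + h *\<^sub>R axis i 1 + h *\<^sub>R axis j 1) - w (x + h *\<^sub>R axis i 1) - w (x + h *\<^sub>R axis j 1) + w x
       = h^2 * D2w (x + s *\<^sub>R axis i 1 + t *\<^sub>R axis j 1) $ i $ j"
proof -
  define P where "P s t = x + s *\<^sub>R axis i 1 + t *\<^sub>R axis j 1" for s t
  have P_i: "P s t = (x + t *\<^sub>R axis j 1) + s *\<^sub>R axis i 1"
   and P_j: "P s t = (x + s *\<^sub>R axis i 1) + t *\<^sub>R axis j 1" for s t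
    by (simp_all add: P_def algebra_simps)
  define g where "g s = w (P s h) - w (P s 0)" for s
  have g': "(g has_real_derivative (Dw (P s h) $ i - Dw (P s 0) $ i)) (at s)" if "0 \<le> s" "s \<le> h" for s
    unfolding g_def P_i using h that
    by (intro DERIV_diff has_real_derivative_along_axis Dw square[of s, folded P_def, unfolded P_i]) auto
  obtain s where s: "0 < s" "s < h" and gs: "g h - g 0 = (h - 0) * (Dw (P s h) $ i - Dw (P s 0) $ i)"
    using MVT2[OF h g'] by auto
  define m where "m t = Dw (P s t) $ i" for t
  have m': "(m has_real_derivative D2w (P s t) $ i $ j) (at t)" if "0 \<le> t" "t \<le> h" for t
    unfolding m_def P_j using s that
    by (intro has_real_derivative_along_axis_matrix D2w square[of s t, folded P_def, unfolded P_j]) auto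
  obtain t where t: "0 < t" "t < h" and mt: "m h - m 0 = (h - 0) * D2w (P s t) $ i $ j"
    using MVT2[OF h m'] by auto
  have "w (P h h) - w (P h 0) - w (P 0 h) + w (P 0 0) = h^2 * D2w (P s t) $ i $ j"
    using gs mt unfolding g_def m_def by (simp add: power2_eq_square algebra_simps)
  with s t show ?thesis
    by (intro that[of s t]) (auto simp: P_def)
qed

lemma hessian_swapped_entries_agree_nearby:
  fixes w :: "real^'n \<Rightarrow> real"
  assumes d: "d > 0" "ball x d \<subseteq> S"
    and Dw: "\<And>y. y \<in> S \<Longrightarrow> (w has_derivative (\<lambda>h. Dw y \<bullet> h)) (at y)"
    and D2w: "\<And>y. y \<in> S \<Longrightarrow> (Dw has_derivative (\<lambda>h. D2w y *v h)) (at y)"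
  obtains y z where "y \<in> ball x d" "z \<in> ball x d" "D2w y $ i $ j = D2w z $ j $ i"
proof -
  define h where "h = d / 3"
  have h: "h > 0"
    using d by (simp add: h_def)
  have near: "x + s *\<^sub>R axis p 1 + t *\<^sub>R axis q 1 \<in> ball x d"
    if "s \<in> {0..h}" "t \<in> {0..h}" for s t p q
  proof -
    have "dist (x + s *\<^sub>R axis p 1 + t *\<^sub>R axis q 1) x
        \<le> norm (s *\<^sub>R axis p (1::real)) + norm (t *\<^sub>R axis q (1::real))"
      using norm_triangle_ineq[of "s *\<^sub>R axis p (1::real)" "t *\<^sub>R axis q 1"] by (simp add: dist_norm)
    also have "\<dots> < d"
      using that d by (simp add: h_def)
    finally show ?thesis
      by (simp add: dist_commute)
  qed
  have square: "x + s *\<^sub>R axis p 1 + t *\<^sub>R axis q 1 \<in> S" if "s \<in> {0..h}" "t \<in> {0..h}" for s t p q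
    using near[OF that] d(2) by blast
  obtain s1 t1 where st1: "s1 \<in> {0<..<h}" "t1 \<in> {0<..<h}" and eq1:
    "w (x + h *\<^sub>R axis i 1 + h *\<^sub>R axis j 1) - w (x + h *\<^sub>R axis i 1) - w (x + h *\<^sub>R axis j 1) + w x
       = h^2 * D2w (x + s1 *\<^sub>R axis i 1 + t1 *\<^sub>R axis j 1) $ i $ j"
    using second_difference_mean_value[OF h square Dw D2w] by blast
  obtain s2 t2 where st2: "s2 \<in> {0<..<h}" "t2 \<in> {0<..<h}" and eq2:
    "w (x + h *\<^sub>R axis j 1 + h *\<^sub>R axis i 1) - w (x + h *\<^sub>R axis j 1) - w (x + h *\<^sub>R axis i 1) + w x
       = h^2 * D2w (x + s2 *\<^sub>R axis j 1 + t2 *\<^sub>R axis i 1) $ j $ i"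
    using second_difference_mean_value[OF h square Dw D2w] by blast
  have corner: "x + h *\<^sub>R axis j 1 + h *\<^sub>R axis i 1 = x + h *\<^sub>R axis i 1 + h *\<^sub>R axis j 1"
    by (simp add: algebra_simps)
  have "h^2 * D2w (x + s1 *\<^sub>R axis i 1 + t1 *\<^sub>R axis j 1) $ i $ j
      = h^2 * D2w (x + s2 *\<^sub>R axis j 1 + t2 *\<^sub>R axis i 1) $ j $ i"
    using eq1 eq2[unfolded corner] by linarith
  with h have "D2w (x + s1 *\<^sub>R axis i 1 + t1 *\<^sub>R axis j 1) $ i $ j
      = D2w (x + s2 *\<^sub>R axis j 1 + t2 *\<^sub>R axis i 1) $ j $ i"
    by simp
  moreover have "x + s1 *\<^sub>R axis i 1 + t1 *\<^sub>R axis j 1 \<in> ball x d"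
    using st1 by (intro near) auto
  moreover have "x + s2 *\<^sub>R axis j 1 + t2 *\<^sub>R axis i 1 \<in> ball x d"
    using st2 by (intro near) auto
  ultimately show ?thesis
    using that by blast
qed

lemma hessian_symmetric:
  fixes w :: "real^'n \<Rightarrow> real"
  assumes S: "open S" and x: "x \<in> S"
    and Dw: "\<And>y. y \<in> S \<Longrightarrow> (w has_derivative (\<lambda>h. Dw y \<bullet> h)) (at y)"
    and D2w: "\<And>y. y \<in> S \<Longrightarrow> (Dw has_derivative (\<lambda>h. D2w y *v h)) (at y)"
    and cont: "continuous_on S D2w"
  shows "D2w x $ i $ j = D2w x $ j $ i"
proof (rule ccontr)
  assume "D2w x $ i $ j \<noteq> D2w x $ j $ i"
  then have e: "\<bar>D2w x $ i $ j - D2w x $ j $ i\<bar> / 2 > 0" (is "?e > 0")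
    by simp
  have "isCont (\<lambda>y. D2w y $ p $ q) x" for p q
    using cont S x by (simp add: continuous_on_eq_continuous_at)
  then obtain d1 d2 where
    d1: "d1 > 0" "\<And>y. dist y x < d1 \<Longrightarrow> dist (D2w y $ i $ j) (D2w x $ i $ j) < ?e" and
    d2: "d2 > 0" "\<And>y. dist y x < d2 \<Longrightarrow> dist (D2w y $ j $ i) (D2w x $ j $ i) < ?e"
    using e unfolding continuous_at_eps_delta by meson
  obtain d0 where d0: "d0 > 0" "ball x d0 \<subseteq> S"
    using S x open_contains_ball by blast
  have "min d0 (min d1 d2) > 0" "ball x (min d0 (min d1 d2)) \<subseteq> S"
    using d0 d1 d2 by auto
  then obtain y z where "y \<in> ball x (min d0 (min d1 d2))" "z \<in> ball x (min d0 (min d1 d2))"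
    and "D2w y $ i $ j = D2w z $ j $ i"
    by (rule hessian_swapped_entries_agree_nearby[OF _ _ Dw D2w, where i = i and j = j])
  with d1(2)[of y] d2(2)[of z] show False
    by (auto simp: dist_commute dist_real_def abs_if split: if_split_asm)
qed

section \<open>Boundary behaviour on a box\<close>

lemma box_cart_nonempty:
  fixes a b :: "real^'n"
  assumes "\<And>i. a$i < b$i"
  shows "box a b \<noteq> {}"
proof -
  have "(\<chi> i. (a$i + b$i) / 2) \<in> box a b"
    using assms by (simp add: mem_box_cart field_simps)
  then show ?thesis
    by blast
qed

text \<open>Valid also for \<open>x\<close> on the boundary: both sides are continuous in \<open>x\<close> on \<open>cbox a b\<close>
  and agree on the dense subset \<open>box a b\<close>.\<close>
lemma increment_along_coordinate_eq_integral:
  fixes w :: "real^'n \<Rightarrow> real"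
  assumes ab: "\<And>i. a$i < b$i"
    and w: "continuous_on (cbox a b) w" and cDw: "continuous_on (cbox a b) Dw"
    and Dw: "\<And>x. x \<in> box a b \<Longrightarrow> (w has_derivative (\<lambda>h. Dw x \<bullet> h)) (at x)"
    and x: "x \<in> cbox a b" and \<tau>: "\<tau> \<in> {a$j..b$j}"
  shows "w (vec_upd x j \<tau>) - w (vec_upd x j (a$j)) = integral {a$j..\<tau>} (\<lambda>s. Dw (vec_upd x j s) $ j)"
proof -
  define \<Phi> where "\<Phi> y = w (vec_upd y j \<tau>) - w (vec_upd y j (a$j)) - integral {a$j..\<tau>} (\<lambda>s. Dw (vec_upd y j s) $ j)"
    for y
  have "continuous_on (cbox a b \<times> cbox (a$j) \<tau>) (\<lambda>p. Dw (vec_upd (fst p) j (snd p)))"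
    by (rule continuous_on_compose2[OF cDw])
       (use \<tau> in \<open>auto intro!: continuous_intros simp: mem_box_cart cbox_interval less_eq_vec_def\<close>)
  then have "continuous_on (cbox a b) (\<lambda>y. integral (cbox (a$j) \<tau>) (\<lambda>s. Dw (vec_upd y j s) $ j))"
    by (intro integral_continuous_on_param) (simp add: split_beta continuous_on_component)
  then have "continuous_on (cbox a b) \<Phi>"
    unfolding \<Phi>_def cbox_interval[of "a$j" \<tau>]
    by (intro continuous_intros continuous_on_compose2[OF w])
       (use \<tau> ab in \<open>auto simp: mem_box_cart less_imp_le\<close>)
  moreover have "\<Phi> y = 0" if y: "y \<in> box a b" for y
  proof -
    have "((\<lambda>s. Dw (vec_upd y j s) $ j) has_integral w (vec_upd y j \<tau>) - w (vec_upd y j (a$j))) {a$j..\<tau>}"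
    proof (rule fundamental_theorem_of_calculus_interior)
      show "a$j \<le> \<tau>"
        using \<tau> by simp
      show "continuous_on {a$j..\<tau>} (\<lambda>s. w (vec_upd y j s))"
        by (rule continuous_on_compose2[OF w])
           (use y \<tau> in \<open>auto intro!: continuous_intros simp: mem_box_cart less_imp_le\<close>)
    next
      fix s assume "s \<in> {a$j<..<\<tau>}"
      then have "vec_upd y j s \<in> box a b"
        using y \<tau> by (intro vec_upd_in_box) auto
      from has_real_derivative_partial[OF Dw[OF this], of j]
      show "((\<lambda>s. w (vec_upd y j s)) has_vector_derivative Dw (vec_upd y j s) $ j) (at s)"
        by (simp add: has_real_derivative_iff_has_vector_derivative)
    qed
    then show ?thesis
      unfolding \<Phi>_def by (simp add: integral_unique)
  qed
  moreover have "closure (box a b) = cbox a b"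
    using box_cart_nonempty[OF ab] by simp
  ultimately have "\<Phi> x = 0"
    using continuous_constant_on_closure[of "box a b" \<Phi> 0 x] x by auto
  then show ?thesis
    unfolding \<Phi>_def by simp
qed

lemma tangential_derivative_eq_0:
  fixes w :: "real^'n \<Rightarrow> real"
  assumes ab: "\<And>i. a$i < b$i"
    and w: "continuous_on (cbox a b) w" and cDw: "continuous_on (cbox a b) Dw"
    and Dw: "\<And>x. x \<in> box a b \<Longrightarrow> (w has_derivative (\<lambda>h. Dw x \<bullet> h)) (at x)"
    and w0: "\<And>x. x \<in> cbox a b - box a b \<Longrightarrow> w x = 0"
    and x: "x \<in> cbox a b" and face: "x$i = a$i \<or> x$i = b$i" and ij: "i \<noteq> j"
  shows "Dw x $ j = 0"
proof -
  define g where "g s = Dw (vec_upd x j s) $ j" for s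
  have xj: "x$j \<in> {a$j..b$j}"
    using x by (simp add: mem_box_cart)
  have "continuous_on {a$j..b$j} g"
    unfolding g_def by (intro continuous_on_component continuous_on_compose2[OF cDw])
      (use x in \<open>auto intro!: continuous_intros simp: mem_box_cart\<close>)
  then have "((\<lambda>u. integral {a$j..u} g) has_vector_derivative g (x$j)) (at (x$j) within {a$j..b$j})"
    using xj by (rule integral_has_vector_derivative)
  moreover have zero: "integral {a$j..u} g = 0" if u: "u \<in> {a$j..b$j}" for u
  proof -
    have "vec_upd x j s \<in> cbox a b - box a b" if "s \<in> {a$j..b$j}" for s
      using x that face ij by (auto simp: mem_box_cart)
    then show ?thesis
      using increment_along_coordinate_eq_integral[OF ab w cDw Dw x u] u w0 ab[of j]
      by (simp add: g_def[abs_def] less_imp_le)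
  qed
  moreover have "((\<lambda>u. integral {a$j..u} g) has_vector_derivative 0) (at (x$j) within {a$j..b$j})"
    by (rule has_vector_derivative_transform[OF xj, of _ "\<lambda>u. 0"]) (auto simp: zero)
  ultimately have "g (x$j) = 0"
    using vector_derivative_unique_within_closed_interval[OF ab[of j], of "x$j"] xj
    by (simp add: cbox_interval)
  then show ?thesis
    by (simp add: g_def)
qed

section \<open>A Carleman estimate on a box\<close>

text \<open>Used with \<open>p = w\<^sub>k\<close>, \<open>N = |\<nabla>w|\<^sup>2\<close>, \<open>L = \<Delta>w\<close>, \<open>v = w\<close> and \<open>s, t, u\<close> the values of
  \<open>\<phi>, \<phi>', \<phi>''\<close>; the last summand on the right collects the cross terms, whose integral is
  nonpositive.\<close>
lemma carleman_pointwise: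
  fixes s t u p N L v :: real
  assumes t: "t > 0" and cond: "t^2 + u^2 / t \<le> s^2 * t"
  shows "2 * t * N + s^2 * t * v^2
       \<le> (L - 2 * s * p + (s^2 - t) * v)^2
         + (2 * t * N + 4 * t * p^2 + 4 * (s * p + t * v) * L + 4 * u * v * p + 6 * s^2 * t * v^2 + 4 * s^3 * v * p)"
proof -
  have "(L - 2 * s * p + (s^2 - t) * v)^2
         + (2 * t * N + 4 * t * p^2 + 4 * (s * p + t * v) * L + 4 * u * v * p + 6 * s^2 * t * v^2 + 4 * s^3 * v * p)
         - (2 * t * N + s^2 * t * v^2)
     = (L + s^2 * v + t * v)^2 + (2 * s * p + t * v)^2 + (2 * t * p + u * v)^2 / t + v^2 * (s^2 * t - (t^2 + u^2 / t))"
    using t by (simp add: field_simps power2_eq_square power3_eq_cube)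
  moreover have "0 \<le> (L + s^2 * v + t * v)^2 + (2 * s * p + t * v)^2 + (2 * t * p + u * v)^2 / t
      + v^2 * (s^2 * t - (t^2 + u^2 / t))"
    using t cond by (intro add_nonneg_nonneg mult_nonneg_nonneg) auto
  ultimately show ?thesis
    by linarith
qed

text \<open>Here \<open>w\<close> stands for \<open>e\<^sup>\<psi> u\<close> and \<open>\<phi>, \<phi>', \<phi>''\<close> for \<open>\<psi>', \<psi>'', \<psi>'''\<close>, all functions of \<open>x$k\<close>.\<close>
locale carleman_box =
  fixes a b :: "real^'n::finite" and k :: 'n
    and w :: "real^'n \<Rightarrow> real" and Dw :: "real^'n \<Rightarrow> real^'n" and D2w :: "real^'n \<Rightarrow> real^'n^'n"
    and \<phi> \<phi>' \<phi>'' :: "real \<Rightarrow> real"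
  assumes box: "\<And>i. a$i < b$i"
    and C2: "C2_closure (box a b) w Dw D2w"
    and boundary: "\<And>x. x \<in> frontier (box a b) \<Longrightarrow> w x = 0"
    and top: "\<And>x. x \<in> cbox a b \<Longrightarrow> x$k = b$k \<Longrightarrow> Dw x $ k = 0"
    and \<phi>: "\<And>z. z \<in> {a$k..b$k} \<Longrightarrow> (\<phi> has_real_derivative \<phi>' z) (at z)"
    and \<phi>': "\<And>z. z \<in> {a$k..b$k} \<Longrightarrow> (\<phi>' has_real_derivative \<phi>'' z) (at z)"
    and \<phi>'': "continuous_on {a$k..b$k} \<phi>''"
    and \<phi>_bottom: "\<phi> (a$k) \<ge> 0"
begin

lemma closure_box_eq: "closure (box a b) = cbox a b"
  using box_cart_nonempty[OF box] by simp

lemma w_derivative: "x \<in> box a b \<Longrightarrow> (w has_derivative (\<lambda>h. Dw x \<bullet> h)) (at x)"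
  and Dw_derivative: "x \<in> box a b \<Longrightarrow> (Dw has_derivative (\<lambda>h. D2w x *v h)) (at x)"
  and continuous_on_w: "continuous_on (cbox a b) w"
  and continuous_on_Dw: "continuous_on (cbox a b) Dw"
  and continuous_on_D2w: "continuous_on (cbox a b) D2w"
  using C2 unfolding C2_closure_def closure_box_eq by auto

lemma w_eq_0: "x \<in> cbox a b - box a b \<Longrightarrow> w x = 0"
  using boundary box_cart_nonempty[OF box] by (simp add: frontier_box)

lemma coord_in_interval: "x \<in> cbox a b \<Longrightarrow> x$k \<in> {a$k..b$k}"
  by (simp add: mem_box_cart)

lemma continuous_on_weights [continuous_intros]:
  "continuous_on (cbox a b) (\<lambda>x. \<phi> (x$k))"
  "continuous_on (cbox a b) (\<lambda>x. \<phi>' (x$k))"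
  "continuous_on (cbox a b) (\<lambda>x. \<phi>'' (x$k))"
proof -
  have "continuous_on {a$k..b$k} \<phi>"
    by (rule DERIV_continuous_on) (use \<phi> DERIV_subset in blast)
  moreover have "continuous_on {a$k..b$k} \<phi>'"
    by (rule DERIV_continuous_on) (use \<phi>' DERIV_subset in blast)
  ultimately show "continuous_on (cbox a b) (\<lambda>x. \<phi> (x$k))" "continuous_on (cbox a b) (\<lambda>x. \<phi>' (x$k))"
    "continuous_on (cbox a b) (\<lambda>x. \<phi>'' (x$k))"
    using \<phi>'' by (simp_all add: continuous_on_cbox_coord)
qed

lemmas continuity = continuous_on_w continuous_on_Dw continuous_on_D2w continuous_on_weights

lemma partial_w: "x \<in> box a b \<Longrightarrow> ((\<lambda>t. w (vec_upd x i t)) has_real_derivative Dw x $ i) (at (x$i))"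
  by (rule has_real_derivative_partial[OF w_derivative])

lemma partial_Dw:
  "x \<in> box a b \<Longrightarrow> ((\<lambda>t. Dw (vec_upd x i t) $ j) has_real_derivative D2w x $ j $ i) (at (x$i))"
  by (rule has_real_derivative_partial_matrix[OF Dw_derivative])

lemma partial_\<phi>:
  "x \<in> box a b \<Longrightarrow> ((\<lambda>t. \<phi> (vec_upd x i t $ k)) has_real_derivative (if i = k then \<phi>' (x$k) else 0)) (at (x$i))"
  by (intro has_real_derivative_partial_coord \<phi> coord_in_interval) (use box_subset_cbox in blast)

lemma partial_\<phi>':
  "x \<in> box a b \<Longrightarrow> ((\<lambda>t. \<phi>' (vec_upd x i t $ k)) has_real_derivative (if i = k then \<phi>'' (x$k) else 0)) (at (x$i))"
  by (intro has_real_derivative_partial_coord \<phi>' coord_in_interval) (use box_subset_cbox in blast)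

lemma hessian_symmetric_cbox:
  assumes "x \<in> cbox a b"
  shows "D2w x $ i $ j = D2w x $ j $ i"
proof -
  have "continuous_on (cbox a b) (\<lambda>x. D2w x $ i $ j - D2w x $ j $ i)"
    by (intro continuous_intros continuity)
  moreover have "D2w y $ i $ j - D2w y $ j $ i = 0" if "y \<in> box a b" for y
    using hessian_symmetric[OF open_box that w_derivative Dw_derivative]
      continuous_on_subset[OF continuous_on_D2w box_subset_cbox] by simp
  ultimately show ?thesis
    using continuous_constant_on_closure[of "box a b" "\<lambda>x. D2w x $ i $ j - D2w x $ j $ i" 0 x] assms
    by (simp add: closure_box_eq)
qed

lemma tangential_Dw_eq_0:
  assumes "x \<in> cbox a b" "x$i = a$i \<or> x$i = b$i" "i \<noteq> j"
  shows "Dw x $ j = 0"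
  using tangential_derivative_eq_0[OF box continuous_on_w continuous_on_Dw w_derivative w_eq_0] assms
  by blast

lemma has_integral_partial_w_Dw:
  "((\<lambda>x. \<phi>' (x$k) * (Dw x $ i)^2 + \<phi>' (x$k) * w x * D2w x $ i $ i
      + of_bool (i = k) * \<phi>'' (x$k) * w x * Dw x $ k) has_integral 0) (cbox a b)"
proof (rule has_integral_partial_derivative_eq_0[where F = "\<lambda>x. \<phi>' (x$k) * w x * Dw x $ i" and k = i])
  fix x assume x: "x \<in> box a b"
  show "((\<lambda>t. \<phi>' (vec_upd x i t $ k) * w (vec_upd x i t) * Dw (vec_upd x i t) $ i) has_real_derivative
      \<phi>' (x$k) * (Dw x $ i)^2 + \<phi>' (x$k) * w x * D2w x $ i $ i
      + of_bool (i = k) * \<phi>'' (x$k) * w x * Dw x $ k) (at (x$i))"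
    by (rule DERIV_cong[OF DERIV_mult[OF DERIV_mult[OF partial_\<phi>'[OF x] partial_w[OF x]] partial_Dw[OF x]]])
       (auto simp: power2_eq_square algebra_simps)
next
  fix x assume x: "x \<in> cbox a b"
  have "w (vec_upd x i c) = 0" if "c = a$i \<or> c = b$i" for c
    using x box[of i] that by (intro w_eq_0 vec_upd_in_cbox_minus_box) auto
  then show "\<phi>' (vec_upd x i (a$i) $ k) * w (vec_upd x i (a$i)) * Dw (vec_upd x i (a$i)) $ i = 0 \<and>
      \<phi>' (vec_upd x i (b$i) $ k) * w (vec_upd x i (b$i)) * Dw (vec_upd x i (b$i)) $ i = 0"
    by simp
qed (use box in \<open>auto intro!: continuous_intros continuity\<close>)

lemma has_integral_partial_w_squared:
  "((\<lambda>x. 3 * \<phi> (x$k)^2 * \<phi>' (x$k) * (w x)^2 + 2 * \<phi> (x$k)^3 * w x * Dw x $ k) has_integral 0) (cbox a b)"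
proof (rule has_integral_partial_derivative_eq_0[where F = "\<lambda>x. \<phi> (x$k)^3 * (w x)^2" and k = k])
  fix x assume x: "x \<in> box a b"
  show "((\<lambda>t. \<phi> (vec_upd x k t $ k)^3 * (w (vec_upd x k t))^2) has_real_derivative
      3 * \<phi> (x$k)^2 * \<phi>' (x$k) * (w x)^2 + 2 * \<phi> (x$k)^3 * w x * Dw x $ k) (at (x$k))"
    by (rule DERIV_cong[OF DERIV_mult[OF DERIV_power[OF partial_\<phi>[OF x]] DERIV_power[OF partial_w[OF x]]]])
       (simp add: power2_eq_square power3_eq_cube algebra_simps)
next
  fix x assume x: "x \<in> cbox a b"
  have "w (vec_upd x k c) = 0" if "c = a$k \<or> c = b$k" for c
    using x box[of k] that by (intro w_eq_0 vec_upd_in_cbox_minus_box) auto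
  then show "\<phi> (vec_upd x k (a$k) $ k)^3 * (w (vec_upd x k (a$k)))^2 = 0 \<and>
      \<phi> (vec_upd x k (b$k) $ k)^3 * (w (vec_upd x k (b$k)))^2 = 0"
    by simp
qed (use box in \<open>auto intro!: continuous_intros continuity\<close>)

lemma has_integral_partial_Dw_Dwk:
  assumes ik: "i \<noteq> k"
  shows "((\<lambda>x. \<phi> (x$k) * (D2w x $ i $ i * Dw x $ k + Dw x $ i * D2w x $ k $ i)) has_integral 0) (cbox a b)"
proof (rule has_integral_partial_derivative_eq_0[where F = "\<lambda>x. \<phi> (x$k) * Dw x $ i * Dw x $ k" and k = i])
  fix x assume x: "x \<in> box a b"
  show "((\<lambda>t. \<phi> (vec_upd x i t $ k) * Dw (vec_upd x i t) $ i * Dw (vec_upd x i t) $ k) has_real_derivative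
      \<phi> (x$k) * (D2w x $ i $ i * Dw x $ k + Dw x $ i * D2w x $ k $ i)) (at (x$i))"
    by (rule DERIV_cong[OF DERIV_mult[OF DERIV_mult[OF partial_\<phi>[OF x] partial_Dw[OF x]] partial_Dw[OF x]]])
       (use ik in \<open>simp add: algebra_simps\<close>)
next
  fix x assume x: "x \<in> cbox a b"
  have "Dw (vec_upd x i c) $ k = 0" if "c = a$i \<or> c = b$i" for c
    using box[of i] x that ik by (intro tangential_Dw_eq_0[of _ i]) (auto simp: mem_box_cart)
  then show "\<phi> (vec_upd x i (a$i) $ k) * Dw (vec_upd x i (a$i)) $ i * Dw (vec_upd x i (a$i)) $ k = 0 \<and>
      \<phi> (vec_upd x i (b$i) $ k) * Dw (vec_upd x i (b$i)) $ i * Dw (vec_upd x i (b$i)) $ k = 0"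
    by simp
qed (use box in \<open>auto intro!: continuous_intros continuity\<close>)

lemma has_integral_partial_Dw_squared:
  assumes ik: "i \<noteq> k"
  shows "((\<lambda>x. \<phi>' (x$k) * (Dw x $ i)^2 + 2 * \<phi> (x$k) * Dw x $ i * D2w x $ i $ k) has_integral 0) (cbox a b)"
proof (rule has_integral_partial_derivative_eq_0[where F = "\<lambda>x. \<phi> (x$k) * (Dw x $ i)^2" and k = k])
  fix x assume x: "x \<in> box a b"
  show "((\<lambda>t. \<phi> (vec_upd x k t $ k) * (Dw (vec_upd x k t) $ i)^2) has_real_derivative
      \<phi>' (x$k) * (Dw x $ i)^2 + 2 * \<phi> (x$k) * Dw x $ i * D2w x $ i $ k) (at (x$k))"
    by (rule DERIV_cong[OF DERIV_mult[OF partial_\<phi>[OF x] DERIV_power[OF partial_Dw[OF x]]]])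
       (simp add: algebra_simps)
next
  fix x assume x: "x \<in> cbox a b"
  have "Dw (vec_upd x k c) $ i = 0" if "c = a$k \<or> c = b$k" for c
    using box[of k] x that ik by (intro tangential_Dw_eq_0[of _ k]) (auto simp: mem_box_cart)
  then show "\<phi> (vec_upd x k (a$k) $ k) * (Dw (vec_upd x k (a$k)) $ i)^2 = 0 \<and>
      \<phi> (vec_upd x k (b$k) $ k) * (Dw (vec_upd x k (b$k)) $ i)^2 = 0"
    by simp
qed (use box in \<open>auto intro!: continuous_intros continuity\<close>)

text \<open>The two previous identities combine by the symmetry of the Hessian.\<close>
lemma has_integral_tangential_identity:
  assumes ik: "i \<noteq> k"
  shows "((\<lambda>x. \<phi>' (x$k) * (Dw x $ i)^2 - 2 * \<phi> (x$k) * Dw x $ k * D2w x $ i $ i) has_integral 0) (cbox a b)"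
proof -
  have "((\<lambda>x. (\<phi>' (x$k) * (Dw x $ i)^2 + 2 * \<phi> (x$k) * Dw x $ i * D2w x $ i $ k)
      - 2 * (\<phi> (x$k) * (D2w x $ i $ i * Dw x $ k + Dw x $ i * D2w x $ k $ i))) has_integral 0 - 2 * 0) (cbox a b)"
    by (intro has_integral_diff has_integral_mult_right has_integral_partial_Dw_squared
        has_integral_partial_Dw_Dwk ik)
  then have "((\<lambda>x. (\<phi>' (x$k) * (Dw x $ i)^2 + 2 * \<phi> (x$k) * Dw x $ i * D2w x $ i $ k)
      - 2 * (\<phi> (x$k) * (D2w x $ i $ i * Dw x $ k + Dw x $ i * D2w x $ k $ i))) has_integral 0) (cbox a b)"
    by simp
  then show ?thesis
    by (rule has_integral_eq[rotated]) (simp add: hessian_symmetric_cbox[of _ k i] algebra_simps)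
qed

lemma integral_partial_Dwk_squared_nonpos:
  "integral (cbox a b) (\<lambda>x. \<phi>' (x$k) * (Dw x $ k)^2 + 2 * \<phi> (x$k) * Dw x $ k * D2w x $ k $ k) \<le> 0"
proof (rule integral_partial_derivative_nonpos[where F = "\<lambda>x. \<phi> (x$k) * (Dw x $ k)^2" and k = k])
  fix x assume x: "x \<in> box a b"
  show "((\<lambda>t. \<phi> (vec_upd x k t $ k) * (Dw (vec_upd x k t) $ k)^2) has_real_derivative
      \<phi>' (x$k) * (Dw x $ k)^2 + 2 * \<phi> (x$k) * Dw x $ k * D2w x $ k $ k) (at (x$k))"
    by (rule DERIV_cong[OF DERIV_mult[OF partial_\<phi>[OF x] DERIV_power[OF partial_Dw[OF x]]]])
       (simp add: algebra_simps)
next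
  fix x assume "x \<in> cbox a b"
  then have "Dw (vec_upd x k (b$k)) $ k = 0"
    using box[of k] by (intro top) (auto simp: mem_box_cart)
  then show "\<phi> (vec_upd x k (b$k) $ k) * (Dw (vec_upd x k (b$k)) $ k)^2
      \<le> \<phi> (vec_upd x k (a$k) $ k) * (Dw (vec_upd x k (a$k)) $ k)^2"
    using \<phi>_bottom by simp
qed (use box in \<open>auto intro!: continuous_intros continuity\<close>)

lemma integral_cross_terms_nonpos:
  "integral (cbox a b) (\<lambda>x. 2 * \<phi>' (x$k) * (norm (Dw x))^2 + 4 * \<phi>' (x$k) * (Dw x $ k)^2
      + 4 * (\<phi> (x$k) * Dw x $ k + \<phi>' (x$k) * w x) * lap D2w x + 4 * \<phi>'' (x$k) * w x * Dw x $ k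
      + 6 * \<phi> (x$k)^2 * \<phi>' (x$k) * (w x)^2 + 4 * \<phi> (x$k)^3 * w x * Dw x $ k) \<le> 0"
    (is "integral _ ?cross \<le> 0")
proof -
  define T1 where "T1 = (\<lambda>i x. \<phi>' (x$k) * (Dw x $ i)^2 + \<phi>' (x$k) * w x * D2w x $ i $ i
      + of_bool (i = k) * \<phi>'' (x$k) * w x * Dw x $ k)"
  define T2 where "T2 = (\<lambda>x. 3 * \<phi> (x$k)^2 * \<phi>' (x$k) * (w x)^2 + 2 * \<phi> (x$k)^3 * w x * Dw x $ k)"
  define T3 where "T3 = (\<lambda>i x. \<phi>' (x$k) * (Dw x $ i)^2 - 2 * \<phi> (x$k) * Dw x $ k * D2w x $ i $ i)"
  define T4 where "T4 = (\<lambda>x. \<phi>' (x$k) * (Dw x $ k)^2 + 2 * \<phi> (x$k) * Dw x $ k * D2w x $ k $ k)"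
  have "((\<lambda>x. \<Sum>i\<in>UNIV - {k}. T3 i x) has_integral 0) (cbox a b)"
    using has_integral_sum[of "UNIV - {k}" T3 "\<lambda>i. 0" "cbox a b"] has_integral_tangential_identity
    by (simp add: T3_def)
  moreover have "((\<lambda>x. \<Sum>i\<in>UNIV. T1 i x) has_integral 0) (cbox a b)"
    using has_integral_sum[of UNIV T1 "\<lambda>i. 0" "cbox a b"] has_integral_partial_w_Dw
    by (simp add: T1_def)
  moreover have "(T4 has_integral integral (cbox a b) T4) (cbox a b)"
    unfolding T4_def by (intro integrable_integral integrable_continuous continuous_intros continuity)
  ultimately have sum: "((\<lambda>x. 2 * T4 x - 2 * (\<Sum>i\<in>UNIV - {k}. T3 i x) + 4 * (\<Sum>i\<in>UNIV. T1 i x) + 2 * T2 x)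
      has_integral (2 * integral (cbox a b) T4 - 2 * 0 + 4 * 0 + 2 * 0)) (cbox a b)"
    unfolding T2_def by (intro has_integral_add has_integral_diff has_integral_mult_right has_integral_partial_w_squared)
  have "2 * T4 x - 2 * (\<Sum>i\<in>UNIV - {k}. T3 i x) + 4 * (\<Sum>i\<in>UNIV. T1 i x) + 2 * T2 x = ?cross x" for x
  proof -
    have "(\<Sum>i\<in>UNIV - {k}. T3 i x) = \<phi>' (x$k) * ((norm (Dw x))^2 - (Dw x $ k)^2)
        - 2 * \<phi> (x$k) * Dw x $ k * (lap D2w x - D2w x $ k $ k)"
      unfolding T3_def lap_def power2_norm_eq_inner inner_vec_def
      by (simp add: sum.remove sum_subtractf sum_distrib_left power2_eq_square algebra_simps)
    moreover have "(\<Sum>i\<in>UNIV. T1 i x) = \<phi>' (x$k) * (norm (Dw x))^2 + \<phi>' (x$k) * w x * lap D2w x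
        + \<phi>'' (x$k) * w x * Dw x $ k"
      unfolding T1_def lap_def power2_norm_eq_inner inner_vec_def
      by (simp add: sum.distrib sum_distrib_left power2_eq_square mult.assoc)
    ultimately show ?thesis
      by (simp add: T2_def T4_def power2_eq_square algebra_simps)
  qed
  with sum have "(?cross has_integral (2 * integral (cbox a b) T4 - 2 * 0 + 4 * 0 + 2 * 0)) (cbox a b)"
    by (rule has_integral_eq[rotated])
  then show ?thesis
    using integral_partial_Dwk_squared_nonpos by (simp add: integral_unique T4_def)
qed

lemma carleman_estimate:
  assumes pos: "\<And>z. z \<in> {a$k..b$k} \<Longrightarrow> \<phi>' z > 0"
    and cond: "\<And>z. z \<in> {a$k..b$k} \<Longrightarrow> \<phi>' z ^ 2 + \<phi>'' z ^ 2 / \<phi>' z \<le> \<phi> z ^ 2 * \<phi>' z"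
  shows "integral (cbox a b) (\<lambda>x. 2 * \<phi>' (x$k) * (norm (Dw x))^2 + \<phi> (x$k)^2 * \<phi>' (x$k) * (w x)^2)
       \<le> integral (cbox a b) (\<lambda>x. (lap D2w x - 2 * \<phi> (x$k) * Dw x $ k + (\<phi> (x$k)^2 - \<phi>' (x$k)) * w x)^2)"
    (is "integral _ ?L \<le> integral _ ?Q")
proof -
  let ?cross = "\<lambda>x. 2 * \<phi>' (x$k) * (norm (Dw x))^2 + 4 * \<phi>' (x$k) * (Dw x $ k)^2
      + 4 * (\<phi> (x$k) * Dw x $ k + \<phi>' (x$k) * w x) * lap D2w x + 4 * \<phi>'' (x$k) * w x * Dw x $ k
      + 6 * \<phi> (x$k)^2 * \<phi>' (x$k) * (w x)^2 + 4 * \<phi> (x$k)^3 * w x * Dw x $ k"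
  have int: "?Q integrable_on cbox a b" "?cross integrable_on cbox a b"
    unfolding lap_def by (intro integrable_continuous continuous_intros continuity)+
  have "integral (cbox a b) ?L \<le> integral (cbox a b) (\<lambda>x. ?Q x + ?cross x)"
  proof (rule integral_le)
    show "?L integrable_on cbox a b"
      by (intro integrable_continuous continuous_intros continuity)
    show "(\<lambda>x. ?Q x + ?cross x) integrable_on cbox a b"
      using int by (rule integrable_add)
    fix x assume "x \<in> cbox a b"
    then have "\<phi>' (x$k) > 0" "\<phi>' (x$k)^2 + \<phi>'' (x$k)^2 / \<phi>' (x$k) \<le> \<phi> (x$k)^2 * \<phi>' (x$k)"
      using pos cond coord_in_interval by auto
    then show "?L x \<le> ?Q x + ?cross x"
      by (rule carleman_pointwise)
  qed
  also have "\<dots> = integral (cbox a b) ?Q + integral (cbox a b) ?cross"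
    using int by (rule integral_add)
  also have "\<dots> \<le> integral (cbox a b) ?Q"
    using integral_cross_terms_nonpos by simp
  finally show ?thesis .
qed

end

section \<open>Conjugation by an exponential weight\<close>

lemma axis_1_nth: "axis k (1::real) $ i = of_bool (i = k)"
  by (simp add: axis_def)

lemma has_derivative_exp_coord:
  fixes x :: "real^'n"
  assumes "(\<psi> has_real_derivative D) (at (x$k))"
  shows "((\<lambda>x. exp (\<psi> (x$k))) has_derivative (\<lambda>h. h $ k * (exp (\<psi> (x$k)) * D))) (at x)"
proof -
  have "((\<lambda>z. exp (\<psi> z)) has_real_derivative exp (\<psi> (x$k)) * D) (at (x$k))"
    using assms by (auto intro!: derivative_eq_intros)
  then show ?thesis
    using DERIV_compose_FDERIV[OF _ bounded_linear_imp_has_derivative[OF bounded_linear_vec_nth]] by blast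
qed

lemma has_derivative_exp_weighted:
  fixes u :: "real^'n \<Rightarrow> real"
  assumes \<psi>: "(\<psi> has_real_derivative \<phi> (x$k)) (at (x$k))" and u: "(u has_derivative (\<lambda>h. Du x \<bullet> h)) (at x)"
  shows "((\<lambda>x. exp (\<psi> (x$k)) * u x) has_derivative
      (\<lambda>h. (exp (\<psi> (x$k)) *\<^sub>R (Du x + (\<phi> (x$k) * u x) *\<^sub>R axis k 1)) \<bullet> h)) (at x)"
  by (rule has_derivative_eq_rhs[OF has_derivative_mult[OF has_derivative_exp_coord[OF \<psi>] u]])
     (auto simp: fun_eq_iff inner_add_left inner_axis' algebra_simps)

lemma has_derivative_exp_weighted_gradient:
  fixes u :: "real^'n \<Rightarrow> real"
  assumes \<psi>: "(\<psi> has_real_derivative \<phi> (x$k)) (at (x$k))" and \<phi>: "(\<phi> has_real_derivative \<phi>' (x$k)) (at (x$k))"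
    and u: "(u has_derivative (\<lambda>h. Du x \<bullet> h)) (at x)" and Du: "(Du has_derivative (\<lambda>h. D2u x *v h)) (at x)"
  shows "((\<lambda>x. exp (\<psi> (x$k)) *\<^sub>R (Du x + (\<phi> (x$k) * u x) *\<^sub>R axis k 1)) has_derivative
      (\<lambda>h. (\<chi> j. exp (\<psi> (x$k)) *\<^sub>R (D2u x $ j + \<phi> (x$k) *\<^sub>R (Du x $ j *\<^sub>R axis k 1 + of_bool (j = k) *\<^sub>R Du x)
        + (of_bool (j = k) * (\<phi>' (x$k) + \<phi> (x$k)^2) * u x) *\<^sub>R axis k 1)) *v h)) (at x)"
proof -
  have "((\<lambda>x. \<phi> (x$k)) has_derivative (\<lambda>h. h $ k * \<phi>' (x$k))) (at x)"
    by (rule DERIV_compose_FDERIV[OF \<phi> bounded_linear_imp_has_derivative[OF bounded_linear_vec_nth]])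
  then have "((\<lambda>x. Du x + (\<phi> (x$k) * u x) *\<^sub>R axis k 1) has_derivative
      (\<lambda>h. D2u x *v h + (\<phi> (x$k) * (Du x \<bullet> h) + h $ k * \<phi>' (x$k) * u x) *\<^sub>R axis k 1)) (at x)"
    by (rule has_derivative_eq_rhs[OF has_derivative_add[OF Du
        has_derivative_scaleR_left[OF has_derivative_mult[OF _ u]]]])
       (auto simp: fun_eq_iff algebra_simps)
  from has_derivative_scaleR[OF has_derivative_exp_coord[OF \<psi>] this] show ?thesis
    by (rule has_derivative_eq_rhs)
       (auto simp: fun_eq_iff vec_eq_iff matrix_vector_mul_component inner_add_left inner_axis' axis_1_nth
         algebra_simps power2_eq_square)
qed

lemma C2_closure_exp_weight:
  fixes u :: "real^'n \<Rightarrow> real" and \<psi> \<phi> \<phi>' :: "real \<Rightarrow> real"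
  assumes box: "\<And>i. a$i < b$i"
    and C2: "C2_closure (box a b) u Du D2u"
    and \<psi>: "\<And>z. z \<in> {a$k..b$k} \<Longrightarrow> (\<psi> has_real_derivative \<phi> z) (at z)"
    and \<phi>: "\<And>z. z \<in> {a$k..b$k} \<Longrightarrow> (\<phi> has_real_derivative \<phi>' z) (at z)"
    and \<phi>': "continuous_on {a$k..b$k} \<phi>'"
  obtains D2w where
    "C2_closure (box a b) (\<lambda>x. exp (\<psi> (x$k)) * u x)
       (\<lambda>x. exp (\<psi> (x$k)) *\<^sub>R (Du x + (\<phi> (x$k) * u x) *\<^sub>R axis k 1)) D2w"
    "\<And>x. lap D2w x = exp (\<psi> (x$k)) * (lap D2u x + 2 * \<phi> (x$k) * Du x $ k + (\<phi>' (x$k) + \<phi> (x$k)^2) * u x)"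
proof -
  define D2w where "D2w x = (\<chi> j. exp (\<psi> (x$k)) *\<^sub>R (D2u x $ j
      + \<phi> (x$k) *\<^sub>R (Du x $ j *\<^sub>R axis k 1 + of_bool (j = k) *\<^sub>R Du x)
      + (of_bool (j = k) * (\<phi>' (x$k) + \<phi> (x$k)^2) * u x) *\<^sub>R axis k 1))" for x
  have cl: "closure (box a b) = cbox a b"
    using box_cart_nonempty[OF box] by simp
  have xk: "x$k \<in> {a$k..b$k}" if "x \<in> box a b" for x
    using that by (auto simp: mem_box_cart less_imp_le)
  have "continuous_on {a$k..b$k} \<psi>" "continuous_on {a$k..b$k} \<phi>"
    by (rule DERIV_continuous_on, use \<psi> \<phi> DERIV_subset in blast)+
  then have "continuous_on (cbox a b) (\<lambda>x. \<psi> (x$k))" "continuous_on (cbox a b) (\<lambda>x. \<phi> (x$k))"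
    "continuous_on (cbox a b) (\<lambda>x. \<phi>' (x$k))"
    using \<phi>' by (simp_all add: continuous_on_cbox_coord)
  with C2 have "C2_closure (box a b) (\<lambda>x. exp (\<psi> (x$k)) * u x)
      (\<lambda>x. exp (\<psi> (x$k)) *\<^sub>R (Du x + (\<phi> (x$k) * u x) *\<^sub>R axis k 1)) D2w"
    unfolding C2_closure_def cl D2w_def
    by (intro conjI ballI has_derivative_exp_weighted has_derivative_exp_weighted_gradient \<psi> \<phi> xk)
       (auto intro!: continuous_intros)
  moreover have "lap D2w x = exp (\<psi> (x$k)) * (lap D2u x + 2 * \<phi> (x$k) * Du x $ k + (\<phi>' (x$k) + \<phi> (x$k)^2) * u x)"
    for x
  proof -
    have "D2w x $ j $ j = exp (\<psi> (x$k)) * D2u x $ j $ j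
        + of_bool (j = k) * (exp (\<psi> (x$k)) * (2 * \<phi> (x$k) * Du x $ k + (\<phi>' (x$k) + \<phi> (x$k)^2) * u x))" for j
      by (auto simp: D2w_def axis_1_nth algebra_simps)
    then show ?thesis
      unfolding lap_def by (simp add: sum.distrib sum_distrib_left distrib_left)
  qed
  ultimately show ?thesis
    using that by blast
qed

section \<open>Power weights\<close>

text \<open>The \<open>n\<close>-th derivative of \<open>z \<mapsto> \<mu> (z + r) powr \<beta>\<close>.\<close>
definition power_weight :: "real \<Rightarrow> real \<Rightarrow> real \<Rightarrow> nat \<Rightarrow> real \<Rightarrow> real" where
  "power_weight \<mu> \<beta> r n z = \<mu> * (\<Prod>j<n. \<beta> - real j) * (z + r) powr (\<beta> - real n)"

lemma has_real_derivative_power_weight: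
  assumes "z + r > 0"
  shows "(power_weight \<mu> \<beta> r n has_real_derivative power_weight \<mu> \<beta> r (Suc n) z) (at z)"
proof -
  have "((\<lambda>z. (z + r) powr (\<beta> - real n)) has_real_derivative (\<beta> - real n) * (z + r) powr (\<beta> - real n - 1) * 1)
      (at z)"
    by (rule DERIV_chain2[where f = "\<lambda>y. y powr (\<beta> - real n)" and g = "\<lambda>z. z + r",
          OF has_real_derivative_powr[OF assms]])
       (auto intro!: derivative_eq_intros)
  then show ?thesis
    unfolding power_weight_def by (rule DERIV_cong[OF DERIV_cmult]) (simp add: algebra_simps)
qed

lemma continuous_on_power_weight: "a + r > 0 \<Longrightarrow> continuous_on {a..b} (power_weight \<mu> \<beta> r n)"
  by (rule DERIV_continuous_on[OF DERIV_subset[OF has_real_derivative_power_weight]]) auto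

lemma power_weight_eq:
  assumes "z + r > 0"
  shows "power_weight \<mu> \<beta> r n z = \<mu> * (\<Prod>j<n. \<beta> - real j) * (z + r) powr \<beta> / (z + r) ^ n"
  using assms by (simp add: power_weight_def powr_diff powr_realpow)

lemma power_weight_pos:
  assumes "\<mu> > 0" "z + r > 0" "real n < \<beta> + 1"
  shows "power_weight \<mu> \<beta> r n z > 0"
  using assms unfolding power_weight_def by (intro mult_pos_pos prod_pos) auto

lemma power_weight_1_2_3:
  assumes "z + r > 0"
  shows "power_weight \<mu> \<beta> r 1 z = \<mu> * \<beta> * (z + r) powr \<beta> / (z + r)"
    and "power_weight \<mu> \<beta> r 2 z = (\<beta> - 1) * (\<mu> * \<beta> * (z + r) powr \<beta>) / (z + r)^2"
    and "power_weight \<mu> \<beta> r 3 z = (\<beta> - 1) * (\<beta> - 2) * (\<mu> * \<beta> * (z + r) powr \<beta>) / (z + r)^3"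
  using assms by (simp_all add: power_weight_eq eval_nat_numeral algebra_simps)

text \<open>With \<open>X = \<mu> \<beta> (z + r)\<^sup>\<beta>\<close> the claim reduces to \<open>(\<beta> - 1) X + (\<beta> - 2)\<^sup>2 \<le> X\<^sup>2\<close>, which holds
  once \<open>X > 2 \<beta>\<close>.\<close>
lemma power_weight_carleman_condition:
  assumes \<beta>: "\<beta> > 1" and c: "z + r > 0" and large: "\<mu> * (z + r) powr \<beta> > 2"
  shows "power_weight \<mu> \<beta> r 2 z ^ 2 + power_weight \<mu> \<beta> r 3 z ^ 2 / power_weight \<mu> \<beta> r 2 z
       \<le> power_weight \<mu> \<beta> r 1 z ^ 2 * power_weight \<mu> \<beta> r 2 z"
proof -
  define X where "X = \<mu> * \<beta> * (z + r) powr \<beta>"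
  have X: "X > 2 * \<beta>"
    using large \<beta> by (simp add: X_def)
  define y where "y = z + r"
  define m where "m = (\<beta> - 1) * X / y^4"
  note pw = power_weight_1_2_3[OF c, of \<mu> \<beta>, folded X_def, folded y_def]
  have c: "y > 0" "X \<noteq> 0" "\<beta> - 1 \<noteq> 0"
    using c X \<beta> by (auto simp: y_def)
  have "power_weight \<mu> \<beta> r 2 z ^ 2 + power_weight \<mu> \<beta> r 3 z ^ 2 / power_weight \<mu> \<beta> r 2 z
      = m * ((\<beta> - 1) * X + (\<beta> - 2)^2)"
    unfolding pw m_def using c by (simp add: field_simps eval_nat_numeral)
  also have "\<dots> \<le> m * X^2"
  proof (rule mult_left_mono)
    have "X * (X - \<beta> + 1) \<ge> (2 * \<beta>) * (\<beta> + 1)"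
      using X \<beta> by (intro mult_mono) auto
    then have "X * X - X * \<beta> + X \<ge> 2 * \<beta> * \<beta> + 2 * \<beta>"
      by (simp add: algebra_simps)
    moreover have "\<beta> * \<beta> \<ge> \<beta>"
      using \<beta> by simp
    moreover have "(\<beta> - 1) * X + (\<beta> - 2)^2 = X * \<beta> - X + \<beta> * \<beta> - 4 * \<beta> + 4"
      by (simp add: power2_eq_square algebra_simps)
    moreover have "X^2 = X * X"
      by (simp add: power2_eq_square)
    ultimately show "(\<beta> - 1) * X + (\<beta> - 2)^2 \<le> X^2"
      using \<beta> by linarith
    show "0 \<le> m"
      using X \<beta> c by (simp add: m_def)
  qed
  also have "\<dots> = power_weight \<mu> \<beta> r 1 z ^ 2 * power_weight \<mu> \<beta> r 2 z"
    unfolding pw m_def using c by (simp add: field_simps eval_nat_numeral)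
  finally show ?thesis .
qed

lemma power_weight_2_lower_bound:
  assumes \<beta>: "\<beta> > 1" and \<mu>: "\<mu> > 0" and c: "1 \<le> z + r" "z + r \<le> \<rho>"
  shows "\<mu> * (\<beta> - 1) / \<rho> \<le> power_weight \<mu> \<beta> r 2 z"
proof -
  have Q: "z + r \<le> (z + r) powr \<beta>"
    using powr_mono[of 1 \<beta> "z + r"] c \<beta> by simp
  have "\<mu> * (\<beta> - 1) / \<rho> = \<mu> * (\<beta> - 1) * (1 / \<rho>)"
    by simp
  also have "1 / \<rho> \<le> 1 / (z + r)"
    using c by (intro divide_left_mono) auto
  also have "\<dots> = (z + r) / (z + r)^2"
    using c by (simp add: power2_eq_square)
  also have "\<dots> \<le> \<beta> * (z + r) powr \<beta> / (z + r)^2"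
    using Q c \<beta> by (intro divide_right_mono order_trans[OF Q]) (auto intro: mult_left_le_one_le simp: mult_le_cancel_right1)
  also have "\<mu> * (\<beta> - 1) * (\<beta> * (z + r) powr \<beta> / (z + r)^2) = power_weight \<mu> \<beta> r 2 z"
    using c by (simp add: power_weight_1_2_3)
  finally show ?thesis
    using \<mu> \<beta> by (simp add: mult_left_mono)
qed

lemma power_weight_1_2_product_lower_bound:
  assumes \<beta>: "\<beta> > 1" and \<mu>: "\<mu> > 0" and c: "1 \<le> d" "d \<le> z + r" "z + r \<le> \<rho>"
  shows "\<mu>^3 * \<beta>^2 * (\<beta> - 1) * d powr (2 * \<beta>) / \<rho>^3
       \<le> power_weight \<mu> \<beta> r 1 z ^ 2 * power_weight \<mu> \<beta> r 2 z"
proof -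
  define Q where "Q = (z + r) powr \<beta>"
  have cpos: "z + r > 0"
    using c by linarith
  have Qd: "d powr \<beta> \<le> Q"
    unfolding Q_def using c \<beta> by (intro powr_mono2) auto
  have Qc: "z + r \<le> Q"
    using powr_mono[of 1 \<beta> "z + r"] c \<beta> by (simp add: Q_def)
  have "d powr (2 * \<beta>) / \<rho>^3 \<le> Q^2 / (z + r)^3"
  proof (rule frac_le)
    have "d powr (2 * \<beta>) = (d powr \<beta>)^2"
      by (simp add: powr_add[symmetric] power2_eq_square)
    then show "d powr (2 * \<beta>) \<le> Q^2"
      using Qd by (simp add: power_mono)
    show "(z + r)^3 \<le> \<rho>^3"
      using c by (intro power_mono) auto
  qed (use c in auto)
  also have "\<dots> = Q^2 * (z + r) / (z + r)^4"
    using c by (simp add: eval_nat_numeral)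
  also have "\<dots> \<le> Q^2 * Q / (z + r)^4"
    using Qc c by (intro divide_right_mono mult_left_mono) auto
  also have "\<dots> \<le> \<beta> * Q^3 / (z + r)^4"
    using Qc c \<beta> by (intro divide_right_mono) (auto simp: power2_eq_square power3_eq_cube)
  finally have "\<mu>^3 * \<beta>^2 * (\<beta> - 1) * (d powr (2 * \<beta>) / \<rho>^3) \<le> \<mu>^3 * \<beta>^2 * (\<beta> - 1) * (\<beta> * Q^3 / (z + r)^4)"
    using \<mu> \<beta> by (intro mult_left_mono) auto
  also have "\<dots> = power_weight \<mu> \<beta> r 1 z ^ 2 * power_weight \<mu> \<beta> r 2 z"
    unfolding power_weight_1_2_3[OF cpos] Q_def using cpos by (simp add: field_simps eval_nat_numeral)
  finally show ?thesis
    by simp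
qed

lemma exp_power_weight_0:
  assumes "b > 0" "z + r > 0"
  shows "exp (2 * lam * ((z + r) / b) powr \<beta>) = exp (power_weight (lam * b powr - \<beta>) \<beta> r 0 z)^2"
  using assms by (simp add: power_weight_def powr_divide powr_minus_divide flip: exp_double)

section \<open>The estimate on the cube\<close>

lemma cube_eq_box: "cube R = box (\<chi> i. - R) (\<chi> i. R)"
  by (simp add: cube_def)

lemma closure_cube: "R > 0 \<Longrightarrow> closure (cube R) = cbox (\<chi> i. - R) (\<chi> i. R)"
  unfolding cube_eq_box by (rule closure_box[OF box_cart_nonempty]) simp

lemma carleman_box_power_weight:
  fixes u :: "real^'n::finite \<Rightarrow> real" and k :: 'n
  assumes R: "R > 0" and r: "r > R" and \<mu>: "\<mu> > 0" and \<beta>: "\<beta> > 0"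
    and C2w: "C2_closure (box (\<chi> i. - R) (\<chi> i. R)) (\<lambda>x. exp (power_weight \<mu> \<beta> r 0 (x$k)) * u x)
      (\<lambda>x. exp (power_weight \<mu> \<beta> r 0 (x$k)) *\<^sub>R (Du x + (power_weight \<mu> \<beta> r 1 (x$k) * u x) *\<^sub>R axis k 1)) D2w"
    and u0: "\<forall>x\<in>frontier (cube R). u x = 0"
    and top: "\<forall>x\<in>closure (cube R). x $ k = R \<longrightarrow> Du x $ k = 0"
  shows "carleman_box (\<chi> i. - R) (\<chi> i. R) k (\<lambda>x. exp (power_weight \<mu> \<beta> r 0 (x$k)) * u x)
      (\<lambda>x. exp (power_weight \<mu> \<beta> r 0 (x$k)) *\<^sub>R (Du x + (power_weight \<mu> \<beta> r 1 (x$k) * u x) *\<^sub>R axis k 1))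
      D2w (power_weight \<mu> \<beta> r 1) (power_weight \<mu> \<beta> r 2) (power_weight \<mu> \<beta> r 3)"
proof
  let ?p = "power_weight \<mu> \<beta> r"
  have box: "(\<chi> i::'n. - R) $ i < (\<chi> i::'n. R) $ i" for i
    using R by simp
  then show "(\<chi> i::'n. - R) $ i < (\<chi> i::'n. R) $ i" for i .
  have deriv: "(?p n has_real_derivative ?p (Suc n) z) (at z)" if "z \<in> {-R..R}" for n z
    using that r by (intro has_real_derivative_power_weight) auto
  then show "(?p 1 has_real_derivative ?p 2 z) (at z)" "(?p 2 has_real_derivative ?p 3 z) (at z)"
    if "z \<in> {(\<chi> i::'n. - R) $ k..(\<chi> i::'n. R) $ k}" for z
    using that deriv[of z 1] deriv[of z 2] by (simp_all add: eval_nat_numeral)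
  show "continuous_on {(\<chi> i::'n. - R) $ k..(\<chi> i::'n. R) $ k} (?p 3)"
    by (simp, rule DERIV_continuous_on) (use deriv DERIV_subset in blast)
  show "exp (?p 0 (x$k)) * u x = 0" if "x \<in> frontier (box (\<chi> i. - R) (\<chi> i. R))" for x
    using u0 that by (simp add: cube_eq_box)
  show "(exp (?p 0 (x$k)) *\<^sub>R (Du x + (?p 1 (x$k) * u x) *\<^sub>R axis k 1)) $ k = 0"
    if "x \<in> cbox (\<chi> i. - R) (\<chi> i. R)" "x $ k = (\<chi> i::'n. R) $ k" for x
  proof -
    have "x \<in> frontier (cube R)"
      using that box_cart_nonempty[OF box] by (auto simp: cube_eq_box frontier_box mem_box_cart)
    then show ?thesis
      using u0 top that box_cart_nonempty[OF box] by (simp add: cube_eq_box)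
  qed
  show "0 \<le> ?p 1 ((\<chi> i::'n. - R) $ k)"
    using power_weight_pos[OF \<mu>, of "- R" r 1 \<beta>] r \<beta> by simp
qed (fact C2w)

lemma carleman_estimate_conjugated:
  fixes u :: "real^'n::finite \<Rightarrow> real" and k :: 'n
  assumes R: "R > 0" and r: "r > R" and \<beta>: "\<beta> > 1" and large: "\<mu> * (r - R) powr \<beta> > 2"
    and C2: "C2_closure (cube R) u Du D2u"
    and u0: "\<forall>x\<in>frontier (cube R). u x = 0"
    and top: "\<forall>x\<in>closure (cube R). x $ k = R \<longrightarrow> Du x $ k = 0"
  defines "\<phi> \<equiv> \<lambda>n x. power_weight \<mu> \<beta> r n (x $ k)"
  shows "integral (cube R) (\<lambda>x. exp (\<phi> 0 x)^2 *
            (2 * \<phi> 2 x * (norm (Du x + (\<phi> 1 x * u x) *\<^sub>R axis k 1))^2 + \<phi> 1 x ^ 2 * \<phi> 2 x * (u x)^2))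
       \<le> integral (cube R) (\<lambda>x. exp (\<phi> 0 x)^2 * (lap D2u x)^2)"
proof -
  let ?lo = "\<chi> i::'n. - R" and ?hi = "\<chi> i::'n. R"
  let ?p = "power_weight \<mu> \<beta> r"
  have \<mu>: "\<mu> > 0"
    using large r by (smt (verit) powr_ge_zero mult_nonpos_nonneg)
  have int: "z + r > 0" "r - R \<le> z + r" if "z \<in> {?lo$k..?hi$k}" for z
    using that r by auto
  have deriv: "(?p n has_real_derivative ?p (Suc n) z) (at z)" if "z \<in> {?lo$k..?hi$k}" for n z
    by (rule has_real_derivative_power_weight[OF int(1)[OF that]])
  have d0: "(?p 0 has_real_derivative ?p 1 z) (at z)" and d1: "(?p 1 has_real_derivative ?p 2 z) (at z)"
    if "z \<in> {?lo$k..?hi$k}" for z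
    using deriv[OF that, of 0] deriv[OF that, of 1] by (simp_all add: eval_nat_numeral)
  have "continuous_on {?lo$k..?hi$k} (?p 2)"
    by (rule DERIV_continuous_on) (use deriv DERIV_subset in blast)
  then obtain D2w where C2w: "C2_closure (box ?lo ?hi) (\<lambda>x. exp (?p 0 (x$k)) * u x)
      (\<lambda>x. exp (?p 0 (x$k)) *\<^sub>R (Du x + (?p 1 (x$k) * u x) *\<^sub>R axis k 1)) D2w"
    and lap: "\<And>x. lap D2w x = exp (?p 0 (x$k)) * (lap D2u x + 2 * ?p 1 (x$k) * Du x $ k + (?p 2 (x$k) + ?p 1 (x$k)^2) * u x)"
    using C2_closure_exp_weight[OF _ C2[unfolded cube_eq_box] d0 d1] R by auto
  have "integral (cbox ?lo ?hi) (\<lambda>x. 2 * ?p 2 (x$k) * (norm (exp (?p 0 (x$k)) *\<^sub>R (Du x + (?p 1 (x$k) * u x) *\<^sub>R axis k 1)))^2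
        + ?p 1 (x$k)^2 * ?p 2 (x$k) * (exp (?p 0 (x$k)) * u x)^2)
      \<le> integral (cbox ?lo ?hi) (\<lambda>x. (lap D2w x - 2 * ?p 1 (x$k) * (exp (?p 0 (x$k)) *\<^sub>R (Du x + (?p 1 (x$k) * u x) *\<^sub>R axis k 1)) $ k
        + (?p 1 (x$k)^2 - ?p 2 (x$k)) * (exp (?p 0 (x$k)) * u x))^2)"
  proof (rule carleman_box.carleman_estimate[OF carleman_box_power_weight[OF R r \<mu> _ C2w u0 top]])
    fix z assume z: "z \<in> {?lo$k..?hi$k}"
    show "?p 2 z > 0"
      using power_weight_pos[OF \<mu> int(1)[OF z]] \<beta> by simp
    have "\<mu> * (r - R) powr \<beta> \<le> \<mu> * (z + r) powr \<beta>"
      using int[OF z] r \<mu> \<beta> by (intro mult_left_mono powr_mono2) auto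
    then show "?p 2 z ^ 2 + ?p 3 z ^ 2 / ?p 2 z \<le> ?p 1 z ^ 2 * ?p 2 z"
      using power_weight_carleman_condition[OF \<beta> int(1)[OF z]] large by simp
  qed (use \<beta> in simp)
  also have "\<dots> = integral (cbox ?lo ?hi) (\<lambda>x. exp (?p 0 (x$k))^2 * (lap D2u x)^2)"
    by (rule integral_cong) (simp add: lap power2_eq_square algebra_simps)
  finally show ?thesis
    unfolding \<phi>_def cube_eq_box integral_open_interval
    by (simp only: norm_scaleR abs_exp_cancel power_mult_distrib) (simp add: algebra_simps)
qed

lemma norm_squared_le_shift:
  fixes g y :: "'a::real_normed_vector"
  shows "(norm g)^2 \<le> 2 * (norm (g + y))^2 + 2 * (norm y)^2"
proof -
  have "norm g \<le> norm (g + y) + norm y"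
    using norm_triangle_sub[of g "g + y"] by simp
  then have "(norm g)^2 \<le> (norm (g + y) + norm y)^2"
    by (simp add: power_mono)
  also have "\<dots> \<le> 2 * (norm (g + y))^2 + 2 * (norm y)^2"
    using sum_squares_bound[of "norm (g + y)" "norm y"] by (simp add: power2_eq_square algebra_simps)
  finally show ?thesis .
qed

lemma weighted_gradient_lower_bound:
  fixes g e :: "'a::real_normed_vector"
  assumes e: "norm e = 1" and t: "0 \<le> t" and c1: "c1 \<le> s^2 * t / 2" and c2: "c2 \<le> t / 4"
  shows "c1 * v^2 + c2 * (norm g)^2 \<le> 2 * t * (norm (g + (s * v) *\<^sub>R e))^2 + s^2 * t * v^2"
proof -
  have "c2 * (norm g)^2 \<le> t / 4 * (2 * (norm (g + (s * v) *\<^sub>R e))^2 + 2 * (norm ((s * v) *\<^sub>R e))^2)"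
    using norm_squared_le_shift[of g "(s * v) *\<^sub>R e"] c2 t by (intro mult_mono) auto
  moreover have "c1 * v^2 \<le> s^2 * t / 2 * v^2"
    using c1 by (intro mult_right_mono) auto
  moreover have "0 \<le> t * (norm (g + (s * v) *\<^sub>R e))^2"
    using t by simp
  ultimately show ?thesis
    using e by (simp add: power_mult_distrib algebra_simps)
qed

lemma power_weight_gradient_lower_bound:
  fixes g e :: "'a::real_normed_vector"
  assumes \<beta>: "\<beta> > 1" and \<mu>: "\<mu> > 0" and z: "1 \<le> d" "d \<le> z + r" "z + r \<le> \<rho>"
    and C1: "4 * C \<le> 1 / \<rho>" and C2: "2 * C \<le> 1 / \<rho>^3" and e: "norm e = 1"
  shows "C * (\<mu>^3 * \<beta>^2 * (\<beta> - 1) * d powr (2 * \<beta>)) * v^2 + C * (\<mu> * (\<beta> - 1)) * (norm g)^2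
       \<le> 2 * power_weight \<mu> \<beta> r 2 z * (norm (g + (power_weight \<mu> \<beta> r 1 z * v) *\<^sub>R e))^2
         + power_weight \<mu> \<beta> r 1 z ^ 2 * power_weight \<mu> \<beta> r 2 z * v^2"
proof (rule weighted_gradient_lower_bound[OF e])
  let ?A1 = "\<mu>^3 * \<beta>^2 * (\<beta> - 1) * d powr (2 * \<beta>)" and ?A2 = "\<mu> * (\<beta> - 1)"
  have "?A1 \<ge> 0" "?A2 \<ge> 0"
    using \<mu> \<beta> by simp_all
  then have "2 * C * ?A1 \<le> ?A1 / \<rho>^3" "4 * C * ?A2 \<le> ?A2 / \<rho>"
    using mult_right_mono[OF C2, of ?A1] mult_right_mono[OF C1, of ?A2] by simp_all
  moreover have "?A1 / \<rho>^3 \<le> power_weight \<mu> \<beta> r 1 z ^ 2 * power_weight \<mu> \<beta> r 2 z"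
    "?A2 / \<rho> \<le> power_weight \<mu> \<beta> r 2 z"
    using power_weight_1_2_product_lower_bound[OF \<beta> \<mu> z] power_weight_2_lower_bound[OF \<beta> \<mu> _ z(3)] z by auto
  moreover show "0 \<le> power_weight \<mu> \<beta> r 2 z"
    using power_weight_pos[OF \<mu>, of z r 2 \<beta>] z \<beta> by simp
  ultimately show "C * ?A1 \<le> (power_weight \<mu> \<beta> r 1 z)^2 * power_weight \<mu> \<beta> r 2 z / 2"
    "C * ?A2 \<le> power_weight \<mu> \<beta> r 2 z / 4"
    by simp_all
qed

lemma carleman_estimate_power_weight:
  fixes u :: "real^'n::finite \<Rightarrow> real" and k :: 'n
  assumes R: "R > 0" and d: "r - R \<ge> 1" and \<beta>: "\<beta> > 1" and large: "\<mu> * (r - R) powr \<beta> > 2"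
    and C1: "4 * C \<le> 1 / (r + R)" and C2: "2 * C \<le> 1 / (r + R)^3"
    and u: "C2_closure (cube R) u Du D2u"
    and u0: "\<forall>x\<in>frontier (cube R). u x = 0"
    and top: "\<forall>x\<in>closure (cube R). x $ k = R \<longrightarrow> Du x $ k = 0"
  defines "E \<equiv> \<lambda>x. exp (power_weight \<mu> \<beta> r 0 (x $ k))"
  shows "C * (\<mu>^3 * \<beta>^2 * (\<beta> - 1) * (r - R) powr (2 * \<beta>)) * integral (cube R) (\<lambda>x. E x^2 * (u x)^2)
         + C * (\<mu> * (\<beta> - 1)) * integral (cube R) (\<lambda>x. E x^2 * (norm (Du x))^2)
       \<le> integral (cube R) (\<lambda>x. E x^2 * (lap D2u x)^2)"
proof -
  let ?p = "\<lambda>n x. power_weight \<mu> \<beta> r n (x $ k)"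
  let ?K = "cbox (\<chi> i::'n. - R) (\<chi> i. R)"
  let ?A1 = "\<mu>^3 * \<beta>^2 * (\<beta> - 1) * (r - R) powr (2 * \<beta>)" and ?A2 = "\<mu> * (\<beta> - 1)"
  have \<mu>: "\<mu> > 0"
    using large d by (smt (verit) powr_ge_zero mult_nonpos_nonneg)
  have coord: "1 \<le> r - R" "r - R \<le> x$k + r" "x$k + r \<le> r + R" if "x \<in> ?K" for x
    using that d by (auto simp: mem_box_cart)
  have cont: "continuous_on ?K u" "continuous_on ?K Du" "continuous_on ?K D2u"
    using u R by (simp_all add: C2_closure_def closure_cube)
  have cont_p: "continuous_on ?K (?p n)" for n
    using continuous_on_cbox_coord[of "\<chi> i. - R" k "\<chi> i. R" "power_weight \<mu> \<beta> r n"]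
      continuous_on_power_weight[of "- R" r R \<mu> \<beta> n] d by simp
  have pt: "C * ?A1 * (E x^2 * (u x)^2) + C * ?A2 * (E x^2 * (norm (Du x))^2)
      \<le> E x^2 * (2 * ?p 2 x * (norm (Du x + (?p 1 x * u x) *\<^sub>R axis k 1))^2 + ?p 1 x ^ 2 * ?p 2 x * (u x)^2)"
    if x: "x \<in> ?K" for x
    using mult_left_mono[OF power_weight_gradient_lower_bound[OF \<beta> \<mu> coord[OF x] C1 C2, of "axis k 1" "u x" "Du x"],
        of "E x^2"]
    by (simp add: algebra_simps)
  have "C * ?A1 * integral ?K (\<lambda>x. E x^2 * (u x)^2) + C * ?A2 * integral ?K (\<lambda>x. E x^2 * (norm (Du x))^2)
      = integral ?K (\<lambda>x. C * ?A1 * (E x^2 * (u x)^2) + C * ?A2 * (E x^2 * (norm (Du x))^2))"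
    unfolding E_def using cont cont_p
    by (simp add: integral_add integral_mult_right integrable_continuous continuous_intros)
  also have "\<dots> \<le> integral ?K (\<lambda>x. E x^2 *
      (2 * ?p 2 x * (norm (Du x + (?p 1 x * u x) *\<^sub>R axis k 1))^2 + ?p 1 x ^ 2 * ?p 2 x * (u x)^2))"
    unfolding E_def using pt cont cont_p
    by (intro integral_le integrable_continuous continuous_intros) (auto simp: E_def)
  also have "\<dots> \<le> integral ?K (\<lambda>x. E x^2 * (lap D2u x)^2)"
    using carleman_estimate_conjugated[OF R _ \<beta> large u u0 top] d
    by (simp add: E_def cube_eq_box integral_open_interval)
  finally show ?thesis
    by (simp add: cube_eq_box integral_open_interval)
qed

lemma carleman_estimate_cube:
  fixes R r b \<beta> lam C :: real and k :: "'n::finite" and u :: "real^'n \<Rightarrow> real"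
  assumes R: "R > 0" and r: "r > R + 1" and b: "b > R + r" and \<beta>: "\<beta> > 1"
    and lam: "lam > 2 * b powr \<beta> / (r - R) powr \<beta>"
    and C1: "4 * C \<le> 1 / (r + R)" and C2: "2 * C \<le> 1 / (r + R)^3"
    and u: "C2_closure (cube R) u Du D2u"
    and u0: "\<forall>x\<in>frontier (cube R). u x = 0"
    and top: "\<forall>x\<in>closure (cube R). x $ k = R \<longrightarrow> Du x $ k = 0"
  shows "C * lam^3 * \<beta>^2 * (\<beta> - 1) * b powr (-3 * \<beta>) * (r - R) powr (2 * \<beta>)
            * integral (cube R) (\<lambda>x. exp (2 * lam * ((x $ k + r) / b) powr \<beta>) * \<bar>u x\<bar>^2)
         + C * lam * (\<beta> - 1) * b powr (- \<beta>)
            * integral (cube R) (\<lambda>x. exp (2 * lam * ((x $ k + r) / b) powr \<beta>) * norm (Du x)^2)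
       \<le> integral (cube R) (\<lambda>x. exp (2 * lam * ((x $ k + r) / b) powr \<beta>) * \<bar>lap D2u x\<bar>^2)"
proof -
  define \<mu> where "\<mu> = lam * b powr - \<beta>"
  have bpos: "b > 0" and d: "r - R > 1"
    using b R r by linarith+
  have "lam * (r - R) powr \<beta> > 2 * b powr \<beta>"
    using lam d by (simp add: pos_divide_less_eq)
  then have large: "\<mu> * (r - R) powr \<beta> > 2"
    using bpos by (simp add: \<mu>_def powr_minus_divide field_simps)
  have "lam^3 * \<beta>^2 * (\<beta> - 1) * b powr (-3 * \<beta>) * (r - R) powr (2 * \<beta>)
      = \<mu>^3 * \<beta>^2 * (\<beta> - 1) * (r - R) powr (2 * \<beta>)"
    using bpos by (simp add: \<mu>_def power_mult_distrib powr_power)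
  moreover have "lam * (\<beta> - 1) * b powr (- \<beta>) = \<mu> * (\<beta> - 1)"
    by (simp add: \<mu>_def)
  moreover have "exp (2 * lam * ((x $ k + r) / b) powr \<beta>) = exp (power_weight \<mu> \<beta> r 0 (x $ k))^2"
    if "x \<in> cube R" for x
  proof -
    have "x $ k + r > 0"
      using that d by (auto simp: cube_eq_box mem_box_cart dest!: spec[of _ k])
    then show ?thesis
      by (simp add: exp_power_weight_0[OF bpos] \<mu>_def)
  qed
  then have "integral (cube R) (\<lambda>x. exp (2 * lam * ((x $ k + r) / b) powr \<beta>) * f x)
      = integral (cube R) (\<lambda>x. exp (power_weight \<mu> \<beta> r 0 (x $ k))^2 * f x)" for f
    by (intro integral_cong) simp
  ultimately show ?thesis
    using carleman_estimate_power_weight[OF R _ \<beta> large C1 C2 u u0 top] d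
    by (simp only: mult.assoc power2_abs)
qed

theorem theorem3p1:
  fixes R r b :: real
  assumes "R > 0" and "r > R + 1" and "b > R + r"
  shows "\<exists>C>0. \<forall>\<beta>>1. \<exists>lam0. \<forall>lam>lam0. \<forall>(k::'n::finite) (u::real^'n \<Rightarrow> real) Du D2u.
     C2_closure (cube R) u Du D2u \<and>
     (\<forall>x\<in>frontier (cube R). u x = 0) \<and>
     (\<forall>x\<in>closure (cube R). x $ k = R \<longrightarrow> Du x $ k = 0) \<longrightarrow>
     integral (cube R) (\<lambda>x. exp (2 * lam * ((x $ k + r) / b) powr \<beta>) * \<bar>lap D2u x\<bar>^2)
       \<ge> C * lam^3 * \<beta>^2 * (\<beta> - 1) * b powr (-3 * \<beta>) * (r - R) powr (2 * \<beta>)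
            * integral (cube R) (\<lambda>x. exp (2 * lam * ((x $ k + r) / b) powr \<beta>) * \<bar>u x\<bar>^2)
         + C * lam * (\<beta> - 1) * b powr (- \<beta>)
            * integral (cube R) (\<lambda>x. exp (2 * lam * ((x $ k + r) / b) powr \<beta>) * norm (Du x)^2)"
proof -
  define C where "C = min (1 / (4 * (r + R))) (1 / (2 * (r + R)^3))"
  have pos: "r + R > 0"
    using assms by linarith
  have C: "C > 0"
    using pos by (simp add: C_def)
  have "C \<le> 1 / (4 * (r + R))" "C \<le> 1 / (2 * (r + R)^3)"
    by (simp_all add: C_def)
  with pos have C_bounds: "4 * C \<le> 1 / (r + R)" "2 * C \<le> 1 / (r + R)^3"
    by (simp_all add: field_simps)
  show ?thesis
    using C carleman_estimate_cube[OF assms _ _ C_bounds] by (intro exI[of _ C]) blast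
qed

end
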